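(* Let $n\ge 1$ and let $\mu$ be a locally valid MV assignment of $M_{2,n}$. Let $w_1,w_2,w_3$ be its three locally valid extensions to $M_{2,n+1}$, ordered so that $f(w_1)\ge f(w_2)\ge f(w_3)$, where $f$ denotes the number of flippable faces. If $n=1$, or if $n\ge2$ and $(\mu(e_{3n-4}),\mu(e_{3n-3}),\mu(e_{3n-2}))$ equals $(M,V,M)$ or $(V,M,V)$, then $$(f(w_1)-f(\mu),\,f(w_2)-f(\mu),\,f(w_3)-f(\mu))=(2,0,0).$$ Otherwise $$(f(w_1)-f(\mu),\,f(w_2)-f(\mu),\,f(w_3)-f(\mu))=(2,1,0).$$
   Context: The $2\times n$ Miura-ori $M_{2,n}$ ($n\ge1$) has faces $\alpha_{i,j}$ ($i\in\{1,2\}$, $j\in\{1,\dots,n\}$), interior vertices $x_1,\dots,x_{n-1}$, and creases $e_0$ and $e_{3k-1},e_{3k},e_{3k+1}$ ($k=1,\dots,n-1$). At $x_k$ the creases are left $e_{3k-3}$, top $e_{3k-1}$, right $e_{3k}$, bottom $e_{3k+1}$ (angles adjacent to the left crease obtuse, others acute). Face $\alpha_{1,j}$ is bordered by those of $e_{3j-4}$ (iff $j\ge2$), $e_{3j-3}$, $e_{3j-1}$ (iff $j\le n-1$); $\alpha_{2,j}$ by those of $e_{3j-2}$ (iff $j\ge2$), $e_{3j-3}$, $e_{3j+1}$ (iff $j\le n-1$). An MV assignment $\mu$ maps creases to $\{M,V\}=\{1,-1\}$; it is locally valid if for each $k$ exactly one of $\mu(e_{3k-1}),\mu(e_{3k}),\mu(e_{3k+1})$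 differs from $\mu(e_{3k-3})$. The face flip $\mu_\alpha$ negates $\mu$ on the creases bordering $\alpha$; $\alpha$ is flippable under $\mu$ if $\mu,\mu_\alpha$ are both locally valid. The creases of $M_{2,n+1}$ are those of $M_{2,n}$ plus $e_{3n-1},e_{3n},e_{3n+1}$ around the new vertex $x_n$ (and the faces of column $n$ get new creases); an extension of $\mu$ is a locally valid MV assignment of $M_{2,n+1}$ agreeing with $\mu$ on the creases of $M_{2,n}$. Each locally valid $\mu$ has exactly three extensions. *)

theory Defs
  imports Main
begin

text \<open>Creases of the 2 x n Miura-ori are indexed by natural numbers: crease e_m is m.
  MV values: M = 1, V = -1 (as integers).\<close>

definition creases :: "nat \<Rightarrow> nat set" where
  "creases n = {0} \<union> (\<Union>k\<in>{1..n-1}. {3*k-1, 3*k, 3*k+1})"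

definition faces :: "nat \<Rightarrow> (nat \<times> nat) set" where
  "faces n = {1,2} \<times> {1..n}"

definition border :: "nat \<Rightarrow> nat \<times> nat \<Rightarrow> nat set" where
  "border n a = (let i = fst a; j = snd a in
     if i = 1 then {e. (e = 3*j-4 \<and> j \<ge> 2) \<or> e = 3*j-3 \<or> (e = 3*j-1 \<and> j \<le> n-1)}
     else {e. (e = 3*j-2 \<and> j \<ge> 2) \<or> e = 3*j-3 \<or> (e = 3*j+1 \<and> j \<le> n-1)})"

text \<open>An MV assignment of M_{2,n}: values in {M,V} = {1,-1} on creases; by convention
  (to make assignments extensional) value 0 off the creases.\<close>

definition mv_assign :: "nat \<Rightarrow> (nat \<Rightarrow> int) \<Rightarrow> bool" where
  "mv_assign n mu \<longleftrightarrow> (\<forall>e\<in>creases n. mu e = 1 \<or> mu e = -1) \<and> (\<forall>e. e \<notin> creases n \<longrightarrow> mu e = 0)"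

definition locally_valid :: "nat \<Rightarrow> (nat \<Rightarrow> int) \<Rightarrow> bool" where
  "locally_valid n mu \<longleftrightarrow> mv_assign n mu \<and>
     (\<forall>k\<in>{1..n-1}. card {e\<in>{3*k-1, 3*k, 3*k+1}. mu e \<noteq> mu (3*k-3)} = 1)"

definition face_flip :: "nat \<Rightarrow> (nat \<Rightarrow> int) \<Rightarrow> nat \<times> nat \<Rightarrow> (nat \<Rightarrow> int)" where
  "face_flip n mu a = (\<lambda>e. if e \<in> border n a then - mu e else mu e)"

definition flippable :: "nat \<Rightarrow> (nat \<Rightarrow> int) \<Rightarrow> nat \<times> nat \<Rightarrow> bool" where
  "flippable n mu a \<longleftrightarrow> locally_valid n mu \<and> locally_valid n (face_flip n mu a)"

definition nflip :: "nat \<Rightarrow> (nat \<Rightarrow> int) \<Rightarrow> nat" where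
  "nflip n mu = card {a\<in>faces n. flippable n mu a}"

definition extensions :: "nat \<Rightarrow> (nat \<Rightarrow> int) \<Rightarrow> (nat \<Rightarrow> int) set" where
  "extensions n mu = {w. locally_valid (n+1) w \<and> (\<forall>e\<in>creases n. w e = mu e)}"

end

(*
  With crease values in {1, -1}, local validity at a vertex x_k says
  top + right + bottom = left, and flipping a face negates two creases at each vertex it
  meets.  So for an extension w of mu only the faces of columns n and n+1 behave
  differently: alpha_{1,n+1} and alpha_{2,n+1} are flippable iff the bottom, resp. top,
  crease of x_n agrees with its left crease, and alpha_{1,n}, alpha_{2,n} stay flippable
  iff the top, resp. bottom, crease does.  An extension is determined by which of top,
  right, bottom disagrees with left, and its gain is accordingly
  1 - [alpha_{1,n} flippable under mu], 2, or 1 - [alpha_{2,n} flippable under mu].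
  At most one of alpha_{1,n}, alpha_{2,n} is not flippable under mu, and both are
  flippable iff n = 1 or x_{n-1} reads MVM or VMV.
*)
theory Submission
  imports Defs
begin

(* For values in {1, -1} this is equivalent to "exactly one of top, right, bottom differs
   from left" (Maekawa's count M - V = +-2 at the vertex). *)
definition vertex_valid :: "(nat \<Rightarrow> int) \<Rightarrow> nat \<Rightarrow> bool" where
  "vertex_valid f k \<longleftrightarrow> f (3*k-1) + f (3*k) + f (3*k+1) = f (3*k-3)"

definition top_agrees :: "(nat \<Rightarrow> int) \<Rightarrow> nat \<Rightarrow> bool" where
  "top_agrees f k \<longleftrightarrow> f (3*k-1) = f (3*k-3)"

definition bottom_agrees :: "(nat \<Rightarrow> int) \<Rightarrow> nat \<Rightarrow> bool" where
  "bottom_agrees f k \<longleftrightarrow> f (3*k+1) = f (3*k-3)"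

lemma creases_bound: "e \<in> creases n \<Longrightarrow> e \<le> 3*n - 2"
  unfolding creases_def by auto

lemma left_crease_in_creases:
  assumes "1 \<le> n"
  shows "3*n - 3 \<in> creases n"
proof (cases "n = 1")
  case False
  with assms have "n - 1 \<in> {1..n-1}" "3*n - 3 = 3*(n-1)" by auto
  then show ?thesis unfolding creases_def by blast
qed (simp add: creases_def)

lemma vertex_creases:
  assumes "k \<in> {1..n-1}"
  shows "{3*k-3, 3*k-1, 3*k, 3*k+1} \<subseteq> creases n"
proof -
  have "{1..k-1} \<subseteq> {1..n-1}" using assms by auto
  then have "creases k \<subseteq> creases n" unfolding creases_def by blast
  with assms left_crease_in_creases[of k] show ?thesis unfolding creases_def by auto
qed

lemma creases_Suc:
  assumes "1 \<le> n"
  shows "creases (n+1) = creases n \<union> {3*n-1, 3*n, 3*n+1}"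
proof -
  have "{1..n} = {1..n-1} \<union> {n}" using assms by auto
  then show ?thesis unfolding creases_def by auto
qed

lemma faces_Suc: "faces (n+1) = insert (1, n+1) (insert (2, n+1) (faces n))"
  unfolding faces_def by auto

lemma card_filter_three:
  assumes "a \<noteq> b" "a \<noteq> c" "b \<noteq> c"
  shows "card {e\<in>{a, b, c}. P e} = of_bool (P a) + of_bool (P b) + of_bool (P c)"
proof -
  have "{e\<in>{a, b, c}. P e} =
      (if P a then {a} else {}) \<union> (if P b then {b} else {}) \<union> (if P c then {c} else {})"
    by auto
  with assms show ?thesis by (cases "P a"; cases "P b"; cases "P c") simp_all
qed

lemma card_differ_eq_1_iff:
  fixes f :: "nat \<Rightarrow> int"
  assumes "a \<noteq> b" "a \<noteq> c" "b \<noteq> c" and "\<forall>e\<in>{l, a, b, c}. f e = 1 \<or> f e = -1"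
  shows "card {e\<in>{a, b, c}. f e \<noteq> f l} = 1 \<longleftrightarrow> f a + f b + f c = f l"
  using assms(4) unfolding card_filter_three[OF assms(1-3)] by auto

lemma sign_eqI:
  fixes x y l :: int
  assumes "x = 1 \<or> x = -1" "y = 1 \<or> y = -1" "l = 1 \<or> l = -1" "x = l \<longleftrightarrow> y = l"
  shows "x = y"
  using assms by auto

lemma locally_valid_iff_vertex_valid:
  "locally_valid n f \<longleftrightarrow> mv_assign n f \<and> (\<forall>k\<in>{1..n-1}. vertex_valid f k)"
proof -
  have "card {e\<in>{3*k-1, 3*k, 3*k+1}. f e \<noteq> f (3*k-3)} = 1 \<longleftrightarrow> vertex_valid f k"
    if "mv_assign n f" "k \<in> {1..n-1}" for k
    using that vertex_creases[OF that(2)] unfolding vertex_valid_def mv_assign_def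
    by (intro card_differ_eq_1_iff) auto
  then show ?thesis unfolding locally_valid_def by blast
qed

lemma locally_valid_vertex_agreement:
  assumes "locally_valid N f" "k \<in> {1..N-1}"
  shows "top_agrees f k \<or> bottom_agrees f k"
    and "top_agrees f k \<and> bottom_agrees f k \<longleftrightarrow>
      (f (3*k-1), f (3*k), f (3*k+1)) = (1, -1, 1) \<or> (f (3*k-1), f (3*k), f (3*k+1)) = (-1, 1, -1)"
proof -
  have "vertex_valid f k" "mv_assign N f" using assms locally_valid_iff_vertex_valid by auto
  moreover have "\<forall>e\<in>{3*k-3, 3*k-1, 3*k, 3*k+1}. f e = 1 \<or> f e = -1"
    using calculation(2) vertex_creases[OF assms(2)] unfolding mv_assign_def by blast
  ultimately show "top_agrees f k \<or> bottom_agrees f k"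
    and "top_agrees f k \<and> bottom_agrees f k \<longleftrightarrow>
      (f (3*k-1), f (3*k), f (3*k+1)) = (1, -1, 1) \<or> (f (3*k-1), f (3*k), f (3*k+1)) = (-1, 1, -1)"
    unfolding vertex_valid_def top_agrees_def bottom_agrees_def by auto
qed

lemma mv_assign_face_flip: "mv_assign N f \<Longrightarrow> mv_assign N (face_flip N f a)"
  unfolding mv_assign_def face_flip_def by auto

lemma vertex_valid_face_flip_distant:
  assumes "1 \<le> j" "k \<noteq> j - 1" "k \<noteq> j"
  shows "vertex_valid (face_flip N f (i, j)) k = vertex_valid f k"
proof -
  have "e \<notin> border N (i, j)" if "e \<in> {3*k-3, 3*k-1, 3*k, 3*k+1}" for e
    using assms that unfolding border_def by (auto; presburger)
  then show ?thesis unfolding vertex_valid_def face_flip_def by simp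
qed

lemma flippable_iff_vertex_valid:
  assumes "locally_valid N f" "1 \<le> j" "j \<le> N"
  shows "flippable N f (i, j) \<longleftrightarrow>
    (2 \<le> j \<longrightarrow> vertex_valid (face_flip N f (i, j)) (j - 1)) \<and>
    (j < N \<longrightarrow> vertex_valid (face_flip N f (i, j)) j)"
proof -
  let ?g = "face_flip N f (i, j)"
  have mv: "mv_assign N f" and valid: "\<forall>k\<in>{1..N-1}. vertex_valid f k"
    using assms(1) locally_valid_iff_vertex_valid by auto
  have "(\<forall>k\<in>{1..N-1}. vertex_valid ?g k) \<longleftrightarrow>
      (2 \<le> j \<longrightarrow> vertex_valid ?g (j - 1)) \<and> (j < N \<longrightarrow> vertex_valid ?g j)"
  proof (intro iffI conjI impI ballI)
    assume all: "\<forall>k\<in>{1..N-1}. vertex_valid ?g k"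
    show "vertex_valid ?g (j - 1)" if "2 \<le> j"
      using that assms(3) by (intro all[rule_format]) auto
    show "vertex_valid ?g j" if "j < N"
      using that assms(2) by (intro all[rule_format]) auto
  next
    fix k assume "(2 \<le> j \<longrightarrow> vertex_valid ?g (j - 1)) \<and> (j < N \<longrightarrow> vertex_valid ?g j)"
      and "k \<in> {1..N-1}"
    with assms(2,3) valid vertex_valid_face_flip_distant[OF assms(2), of k N f i]
    show "vertex_valid ?g k" by (cases "k = j - 1 \<or> k = j") auto
  qed
  then show ?thesis
    unfolding flippable_def locally_valid_iff_vertex_valid using mv valid mv_assign_face_flip by blast
qed

(* The faces (i, k) lie west of the vertex x_k, the faces (i, k+1) east of it. *)
lemma vertex_valid_flip_west:
  assumes "vertex_valid f k" "1 \<le> k" "k < N"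
  shows "vertex_valid (face_flip N f (1, k)) k \<longleftrightarrow> top_agrees f k"
    and "vertex_valid (face_flip N f (2, k)) k \<longleftrightarrow> bottom_agrees f k"
proof -
  have "{3*k-3, 3*k-1} \<subseteq> border N (1, k)" "{3*k, 3*k+1} \<inter> border N (1, k) = {}"
    "{3*k-3, 3*k+1} \<subseteq> border N (2, k)" "{3*k-1, 3*k} \<inter> border N (2, k) = {}"
    using assms(2,3) unfolding border_def by auto
  with assms(1) show "vertex_valid (face_flip N f (1, k)) k \<longleftrightarrow> top_agrees f k"
    and "vertex_valid (face_flip N f (2, k)) k \<longleftrightarrow> bottom_agrees f k"
    unfolding vertex_valid_def face_flip_def top_agrees_def bottom_agrees_def by auto
qed

lemma vertex_valid_flip_east:
  assumes "vertex_valid f k" "1 \<le> k"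
  shows "vertex_valid (face_flip N f (1, k+1)) k \<longleftrightarrow> bottom_agrees f k"
    and "vertex_valid (face_flip N f (2, k+1)) k \<longleftrightarrow> top_agrees f k"
proof -
  have "{3*k-1, 3*k} \<subseteq> border N (1, k+1)" "{3*k-3, 3*k+1} \<inter> border N (1, k+1) = {}"
    "{3*k, 3*k+1} \<subseteq> border N (2, k+1)" "{3*k-3, 3*k-1} \<inter> border N (2, k+1) = {}"
    using assms(2) unfolding border_def by auto
  with assms(1) show "vertex_valid (face_flip N f (1, k+1)) k \<longleftrightarrow> bottom_agrees f k"
    and "vertex_valid (face_flip N f (2, k+1)) k \<longleftrightarrow> top_agrees f k"
    unfolding vertex_valid_def face_flip_def top_agrees_def bottom_agrees_def by auto
qed

lemma flippable_single_column: "locally_valid 1 f \<Longrightarrow> flippable 1 f (i, 1)"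
  by (simp add: flippable_iff_vertex_valid)

lemma flippable_last_column:
  assumes "locally_valid (k+1) f" "1 \<le> k"
  shows "flippable (k+1) f (1, k+1) \<longleftrightarrow> bottom_agrees f k"
    and "flippable (k+1) f (2, k+1) \<longleftrightarrow> top_agrees f k"
proof -
  have "vertex_valid f k" using assms locally_valid_iff_vertex_valid by auto
  then show "flippable (k+1) f (1, k+1) \<longleftrightarrow> bottom_agrees f k"
    and "flippable (k+1) f (2, k+1) \<longleftrightarrow> top_agrees f k"
    using flippable_iff_vertex_valid[OF assms(1), of "k+1"] vertex_valid_flip_east[of f k "k+1"] assms(2)
    by simp_all
qed

lemma last_column_flippable:
  assumes "locally_valid n mu" "1 \<le> n"
  shows "flippable n mu (1, n) \<or> flippable n mu (2, n)"
    and "flippable n mu (1, n) \<and> flippable n mu (2, n) \<longleftrightarrow> n = 1 \<or> (n \<ge> 2 \<and>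
      ((mu (3*n-4), mu (3*n-3), mu (3*n-2)) = (1, -1, 1) \<or> (mu (3*n-4), mu (3*n-3), mu (3*n-2)) = (-1, 1, -1)))"
proof -
  have "(flippable n mu (1, n) \<or> flippable n mu (2, n)) \<and>
    (flippable n mu (1, n) \<and> flippable n mu (2, n) \<longleftrightarrow> n = 1 \<or> (n \<ge> 2 \<and>
      ((mu (3*n-4), mu (3*n-3), mu (3*n-2)) = (1, -1, 1) \<or> (mu (3*n-4), mu (3*n-3), mu (3*n-2)) = (-1, 1, -1))))"
  proof (cases "n = 1")
    case True
    with assms(1) show ?thesis using flippable_single_column by simp
  next
    case False
    with assms(2) obtain k where n: "n = k + 1" and k: "1 \<le> k"
      by (cases n) auto
    have idx: "3*n-4 = 3*k-1" "3*n-3 = 3*k" "3*n-2 = 3*k+1" using n k by auto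
    have "k \<in> {1..n-1}" using n k by simp
    note vertex = locally_valid_vertex_agreement[OF assms(1) this]
    have "flippable n mu (1, n) \<longleftrightarrow> bottom_agrees mu k" "flippable n mu (2, n) \<longleftrightarrow> top_agrees mu k"
      using flippable_last_column[of k mu] assms(1) k unfolding n by simp_all
    with vertex False assms(2) show ?thesis
      unfolding idx by auto
  qed
  then show "flippable n mu (1, n) \<or> flippable n mu (2, n)"
    and "flippable n mu (1, n) \<and> flippable n mu (2, n) \<longleftrightarrow> n = 1 \<or> (n \<ge> 2 \<and>
      ((mu (3*n-4), mu (3*n-3), mu (3*n-2)) = (1, -1, 1) \<or> (mu (3*n-4), mu (3*n-3), mu (3*n-2)) = (-1, 1, -1)))"
    by blast+
qed

lemma face_flip_extension_eq:
  assumes "w \<in> extensions n mu" "j \<le> n" "e \<in> creases n"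
  shows "face_flip (n+1) w (i, j) e = face_flip n mu (i, j) e"
proof -
  have "e \<le> 3*n - 2" using assms(3) by (rule creases_bound)
  with assms(2) have "e \<in> border (n+1) (i, j) \<longleftrightarrow> e \<in> border n (i, j)"
    unfolding border_def by auto
  with assms(1,3) show ?thesis unfolding extensions_def face_flip_def by simp
qed

lemma flippable_extension:
  assumes "locally_valid n mu" "w \<in> extensions n mu" "a \<in> faces n"
  shows "flippable (n+1) w a \<longleftrightarrow> flippable n mu a \<and>
    (a = (1, n) \<longrightarrow> top_agrees w n) \<and> (a = (2, n) \<longrightarrow> bottom_agrees w n)"
proof -
  obtain i j where a: "a = (i, j)" and i: "i = 1 \<or> i = 2" and j: "1 \<le> j" "j \<le> n"
    using assms(3) unfolding faces_def by auto
  have lw: "locally_valid (n+1) w" using assms(2) unfolding extensions_def by simp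
  have old_vertices: "vertex_valid (face_flip (n+1) w (i, j)) k \<longleftrightarrow> vertex_valid (face_flip n mu (i, j)) k"
    if "k \<in> {1..n-1}" for k
    using vertex_creases[OF that] face_flip_extension_eq[OF assms(2) j(2)]
    unfolding vertex_valid_def by auto
  have flip_w: "flippable (n+1) w (i, j) \<longleftrightarrow>
      (2 \<le> j \<longrightarrow> vertex_valid (face_flip (n+1) w (i, j)) (j - 1)) \<and>
      (j < n + 1 \<longrightarrow> vertex_valid (face_flip (n+1) w (i, j)) j)"
    using j by (intro flippable_iff_vertex_valid[OF lw]) auto
  have west: "2 \<le> j \<Longrightarrow> j - 1 \<in> {1..n-1}" using j by auto
  show ?thesis
  proof (cases "j < n")
    case True
    then have "j \<in> {1..n-1}" using j by auto
    with west old_vertices show ?thesis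
      unfolding a flip_w flippable_iff_vertex_valid[OF assms(1) j] using True by auto
  next
    case False
    with j have "j = n" by simp
    moreover have "vertex_valid w n"
      using lw j locally_valid_iff_vertex_valid by auto
    ultimately show ?thesis
      using i j west old_vertices vertex_valid_flip_west[of w n "n+1"]
      unfolding a flip_w flippable_iff_vertex_valid[OF assms(1) j] by auto
  qed
qed

lemma nflip_eq_sum: "int (nflip N f) = (\<Sum>a\<in>faces N. of_bool (flippable N f a))"
  unfolding nflip_def faces_def by (simp add: Int_def)

lemma nflip_extension:
  assumes "1 \<le> n" "locally_valid n mu" "w \<in> extensions n mu"
  shows "int (nflip (n+1) w) = int (nflip n mu) + of_bool (top_agrees w n) + of_bool (bottom_agrees w n)
    - of_bool (flippable n mu (1, n) \<and> \<not> top_agrees w n)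
    - of_bool (flippable n mu (2, n) \<and> \<not> bottom_agrees w n)"
proof -
  let ?F = "faces (n-1)"
  have faces_n: "faces n = insert (1, n) (insert (2, n) ?F)" and fin: "finite ?F"
    using faces_Suc[of "n-1"] assms(1) by (simp_all add: faces_def)
  have new: "(i, n) \<notin> ?F" "(i, n+1) \<notin> ?F" "(i, n+1) \<notin> faces n" for i
    unfolding faces_def by auto
  have lw: "locally_valid (n+1) w" using assms(3) unfolding extensions_def by simp
  have fl_new: "flippable (n+1) w (1, n+1) \<longleftrightarrow> bottom_agrees w n"
    "flippable (n+1) w (2, n+1) \<longleftrightarrow> top_agrees w n"
    using flippable_last_column[OF lw assms(1)] by simp_all
  have fl_last: "flippable (n+1) w (1, n) \<longleftrightarrow> flippable n mu (1, n) \<and> top_agrees w n"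
    "flippable (n+1) w (2, n) \<longleftrightarrow> flippable n mu (2, n) \<and> bottom_agrees w n"
    using flippable_extension[OF assms(2,3)] unfolding faces_n by auto
  have fl_old: "(\<Sum>a\<in>?F. of_bool (flippable (n+1) w a)) = (\<Sum>a\<in>?F. of_bool (flippable n mu a) :: int)"
    using flippable_extension[OF assms(2,3)] new(1) unfolding faces_n by (intro sum.cong) auto
  have "int (nflip (n+1) w) = of_bool (flippable (n+1) w (1, n+1)) + of_bool (flippable (n+1) w (2, n+1))
      + of_bool (flippable (n+1) w (1, n)) + of_bool (flippable (n+1) w (2, n))
      + (\<Sum>a\<in>?F. of_bool (flippable (n+1) w a))"
    unfolding nflip_eq_sum faces_Suc[of n] faces_n using fin new by (simp del: sum_of_bool_eq)
  moreover have "int (nflip n mu) = of_bool (flippable n mu (1, n)) + of_bool (flippable n mu (2, n))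
      + (\<Sum>a\<in>?F. of_bool (flippable n mu a))"
    unfolding nflip_eq_sum faces_n using fin new by (simp del: sum_of_bool_eq)
  ultimately show ?thesis
    unfolding fl_new fl_last fl_old by (cases "top_agrees w n"; cases "bottom_agrees w n") simp_all
qed

lemma extension_top_or_bottom_agrees:
  assumes "1 \<le> n" "w \<in> extensions n mu"
  shows "top_agrees w n \<or> bottom_agrees w n"
proof (rule locally_valid_vertex_agreement(1))
  show "locally_valid (n+1) w" using assms(2) unfolding extensions_def by blast
  show "n \<in> {1..n+1-1}" using assms(1) by simp
qed

lemma extensions_eqI:
  assumes "1 \<le> n" "w \<in> extensions n mu" "w' \<in> extensions n mu"
    and "top_agrees w n \<longleftrightarrow> top_agrees w' n" "bottom_agrees w n \<longleftrightarrow> bottom_agrees w' n"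
  shows "w = w'"
proof
  fix e
  have mv: "mv_assign (n+1) w" "mv_assign (n+1) w'"
    and valid: "vertex_valid w n" "vertex_valid w' n"
    using assms(1-3) unfolding extensions_def locally_valid_iff_vertex_valid by auto
  have old: "w e = w' e" if "e \<in> creases n" for e
    using that assms(2,3) unfolding extensions_def by simp
  have signs: "e \<in> {3*n-3, 3*n-1, 3*n, 3*n+1} \<Longrightarrow> w e = 1 \<or> w e = -1"
    "e \<in> {3*n-3, 3*n-1, 3*n, 3*n+1} \<Longrightarrow> w' e = 1 \<or> w' e = -1" for e
    using mv vertex_creases[of n "n+1"] assms(1) unfolding mv_assign_def by auto
  show "w e = w' e"
  proof (cases "e \<in> creases (n+1)")
    case True
    have left: "w (3*n-3) = w' (3*n-3)" using old left_crease_in_creases[OF assms(1)] .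
    have "w (3*n-1) = w' (3*n-1)"
      by (rule sign_eqI[OF signs(1) signs(2) signs(2)]) (use assms(4) left in \<open>auto simp: top_agrees_def\<close>)
    moreover have "w (3*n+1) = w' (3*n+1)"
      by (rule sign_eqI[OF signs(1) signs(2) signs(2)]) (use assms(5) left in \<open>auto simp: bottom_agrees_def\<close>)
    ultimately have "\<forall>e\<in>{3*n-1, 3*n, 3*n+1}. w e = w' e"
      using left valid unfolding vertex_valid_def by auto
    with True old creases_Suc[OF assms(1)] show ?thesis by auto
  next
    case False
    with mv show ?thesis unfolding mv_assign_def by simp
  qed
qed

lemma sorted_gains:
  fixes g :: "'a \<Rightarrow> int"
  assumes "p \<or> q" "\<forall>x\<in>{x1, x2, x3}. up x \<or> down x"
    and "(up x1, down x1) \<noteq> (up x2, down x2)" "(up x1, down x1) \<noteq> (up x3, down x3)"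
      "(up x2, down x2) \<noteq> (up x3, down x3)"
    and "\<forall>x\<in>{x1, x2, x3}.
      g x = of_bool (up x) + of_bool (down x) - of_bool (p \<and> \<not> up x) - of_bool (q \<and> \<not> down x)"
    and "g x1 \<ge> g x2" "g x2 \<ge> g x3"
  shows "(g x1, g x2, g x3) = (if p \<and> q then (2, 0, 0) else (2, 1, 0))"
proof -
  have "g x = (if \<not> up x then 1 - of_bool p else if \<not> down x then 1 - of_bool q else 2)"
    if "x \<in> {x1, x2, x3}" for x
    using assms(2,6) that by auto
  then have "g x1 = (if \<not> up x1 then 1 - of_bool p else if \<not> down x1 then 1 - of_bool q else 2)"
    "g x2 = (if \<not> up x2 then 1 - of_bool p else if \<not> down x2 then 1 - of_bool q else 2)"
    "g x3 = (if \<not> up x3 then 1 - of_bool p else if \<not> down x3 then 1 - of_bool q else 2)"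
    by simp_all
  with assms(1-5,7,8) show ?thesis
    by (cases "up x1"; cases "down x1"; cases "up x2"; cases "down x2"; cases "up x3"; cases "down x3")
      (auto simp: of_bool_def split: if_split_asm)
qed

theorem theorem4p2:
  fixes n :: nat and mu w1 w2 w3 :: "nat \<Rightarrow> int"
  assumes "n \<ge> 1"
    and "locally_valid n mu"
    and "extensions n mu = {w1, w2, w3}"
    and "w1 \<noteq> w2" and "w1 \<noteq> w3" and "w2 \<noteq> w3"
    and "nflip (n+1) w1 \<ge> nflip (n+1) w2" and "nflip (n+1) w2 \<ge> nflip (n+1) w3"
  shows "(int (nflip (n+1) w1) - int (nflip n mu), int (nflip (n+1) w2) - int (nflip n mu),
           int (nflip (n+1) w3) - int (nflip n mu)) =
         (if n = 1 \<or> (n \<ge> 2 \<and> ((mu (3*n-4), mu (3*n-3), mu (3*n-2)) = (1, -1, 1) \<or>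
                                  (mu (3*n-4), mu (3*n-3), mu (3*n-2)) = (-1, 1, -1)))
          then (2, 0, 0) else (2, 1, 0))"
proof -
  have ext: "w1 \<in> extensions n mu" "w2 \<in> extensions n mu" "w3 \<in> extensions n mu"
    using assms(3) by auto
  have distinct: "(top_agrees w n, bottom_agrees w n) \<noteq> (top_agrees w' n, bottom_agrees w' n)"
    if "w \<in> extensions n mu" "w' \<in> extensions n mu" "w \<noteq> w'" for w w'
    using that extensions_eqI[OF assms(1) that(1,2)] by auto
  have "\<forall>w\<in>{w1, w2, w3}. top_agrees w n \<or> bottom_agrees w n"
    and "\<forall>w\<in>{w1, w2, w3}. int (nflip (n+1) w) - int (nflip n mu) =
      of_bool (top_agrees w n) + of_bool (bottom_agrees w n)
      - of_bool (flippable n mu (1, n) \<and> \<not> top_agrees w n)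
      - of_bool (flippable n mu (2, n) \<and> \<not> bottom_agrees w n)"
    using ext extension_top_or_bottom_agrees[OF assms(1)] nflip_extension[OF assms(1,2)] by simp_all
  from sorted_gains[OF last_column_flippable(1)[OF assms(2,1)] this(1)
      distinct[OF ext(1,2) assms(4)] distinct[OF ext(1,3) assms(5)] distinct[OF ext(2,3) assms(6)] this(2)]
  show ?thesis
    using assms(7,8) unfolding last_column_flippable(2)[OF assms(2,1)] by simp
qed

end
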